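(* Let $\mathcal{B}\models Th(\mathbb{N})$ be nonstandard and fix a nonstandard $\Delta\in B$. Let $\mathcal{A}$ be the substructure of $\mathcal{B}$ with universe $$A=\{Q+z : z\in\mathbb{Z},\ Q\in B,\ Q+z\in B,\ \text{and } n\mid Q \text{ and } 2^{n\Delta}\mid Q \text{ for all standard } 0<n\in\mathbb{N}\}.$$ Then $\mathcal{A}$ satisfies Presburger arithmetic.
   Context: $Th(\mathbb{N})$ is the complete theory of $\langle\mathbb{N},0,1,+,\cdot,\le\rangle$; $2^{n\Delta}$ is computed with the exponential definable in $\mathcal{B}$. Presburger arithmetic here means the axioms: $0\neq z+1$; $x\ne0\to\exists z\,(x=z+1)$; $x+z=y+z\to x=y$; $x+0=x$; associativity and commutativity of $+$; $x\le y\leftrightarrow\exists z\,(x+z=y)$; and for each standard $0<n$, $\exists y\,(ny\le x<n(y+1))$. *)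

theory Defs
  imports Main
begin

datatype tm = Var nat | Zero | One | Plus tm tm | Times tm tm

datatype fm = Eq tm tm | Le tm tm | Neg fm | Conj fm fm | Ex nat fm

fun fv_tm :: "tm \<Rightarrow> nat set" where
  "fv_tm (Var i) = {i}"
| "fv_tm Zero = {}"
| "fv_tm One = {}"
| "fv_tm (Plus s t) = fv_tm s \<union> fv_tm t"
| "fv_tm (Times s t) = fv_tm s \<union> fv_tm t"

fun fv :: "fm \<Rightarrow> nat set" where
  "fv (Eq s t) = fv_tm s \<union> fv_tm t"
| "fv (Le s t) = fv_tm s \<union> fv_tm t"
| "fv (Neg p) = fv p"
| "fv (Conj p q) = fv p \<union> fv q"
| "fv (Ex x p) = fv p - {x}"

record 'a struc =
  univ :: "'a set"
  zer :: 'a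
  on :: 'a
  pl :: "'a \<Rightarrow> 'a \<Rightarrow> 'a"
  tms :: "'a \<Rightarrow> 'a \<Rightarrow> 'a"
  le :: "'a \<Rightarrow> 'a \<Rightarrow> bool"

definition wf_struc :: "'a struc \<Rightarrow> bool" where
  "wf_struc M \<longleftrightarrow> zer M \<in> univ M \<and> on M \<in> univ M \<and>
     (\<forall>x\<in>univ M. \<forall>y\<in>univ M. pl M x y \<in> univ M \<and> tms M x y \<in> univ M)"

fun eval :: "'a struc \<Rightarrow> (nat \<Rightarrow> 'a) \<Rightarrow> tm \<Rightarrow> 'a" where
  "eval M e (Var i) = e i"
| "eval M e Zero = zer M"
| "eval M e One = on M"
| "eval M e (Plus s t) = pl M (eval M e s) (eval M e t)"
| "eval M e (Times s t) = tms M (eval M e s) (eval M e t)"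

fun sat :: "'a struc \<Rightarrow> (nat \<Rightarrow> 'a) \<Rightarrow> fm \<Rightarrow> bool" where
  "sat M e (Eq s t) \<longleftrightarrow> eval M e s = eval M e t"
| "sat M e (Le s t) \<longleftrightarrow> le M (eval M e s) (eval M e t)"
| "sat M e (Neg p) \<longleftrightarrow> \<not> sat M e p"
| "sat M e (Conj p q) \<longleftrightarrow> sat M e p \<and> sat M e q"
| "sat M e (Ex x p) \<longleftrightarrow> (\<exists>a\<in>univ M. sat M (e(x := a)) p)"

definition Nat_struc :: "nat struc" where
  "Nat_struc = \<lparr>univ = UNIV, zer = 0, on = 1, pl = (+), tms = (*), le = (\<le>)\<rparr>"

definition model_ThN :: "'a struc \<Rightarrow> bool" where
  "model_ThN B \<longleftrightarrow> wf_struc B \<and>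
     (\<forall>\<phi>. fv \<phi> = {} \<longrightarrow> sat Nat_struc (\<lambda>_. 0) \<phi> \<longrightarrow> sat B (\<lambda>_. zer B) \<phi>)"

fun num :: "'a struc \<Rightarrow> nat \<Rightarrow> 'a" where
  "num M 0 = zer M"
| "num M (Suc k) = pl M (num M k) (on M)"

definition nonstandard_elt :: "'a struc \<Rightarrow> 'a \<Rightarrow> bool" where
  "nonstandard_elt M x \<longleftrightarrow> x \<in> univ M \<and> x \<notin> range (num M)"

definition env3 :: "'a struc \<Rightarrow> 'a \<Rightarrow> 'a \<Rightarrow> 'a \<Rightarrow> nat \<Rightarrow> 'a" where
  "env3 M x y z = (\<lambda>i. if i = 0 then x else if i = 1 then y else if i = 2 then z else zer M)"

definition defines_exp :: "fm \<Rightarrow> bool" where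
  "defines_exp \<phi> \<longleftrightarrow> fv \<phi> \<subseteq> {0,1,2} \<and>
     (\<forall>a b c :: nat. sat Nat_struc (env3 Nat_struc a b c) \<phi> \<longleftrightarrow> c = a ^ b)"

text \<open>The exponential definable in B: z = x^y in B via a formula defining
  exponentiation in N (all such formulas agree in any model of Th(N)).\<close>

definition exp_rel :: "'a struc \<Rightarrow> 'a \<Rightarrow> 'a \<Rightarrow> 'a \<Rightarrow> bool" where
  "exp_rel B x y z \<longleftrightarrow> (\<exists>\<phi>. defines_exp \<phi> \<and> sat B (env3 B x y z) \<phi>)"

definition dvd_in :: "'a struc \<Rightarrow> 'a \<Rightarrow> 'a \<Rightarrow> bool" where
  "dvd_in B d Q \<longleftrightarrow> (\<exists>w\<in>univ B. tms B d w = Q)"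

definition good :: "'a struc \<Rightarrow> 'a \<Rightarrow> 'a \<Rightarrow> bool" where
  "good B \<Delta> Q \<longleftrightarrow> Q \<in> univ B \<and>
     (\<forall>n::nat. 0 < n \<longrightarrow> dvd_in B (num B n) Q \<and>
        (\<exists>z\<in>univ B. exp_rel B (num B 2) (tms B (num B n) \<Delta>) z \<and> dvd_in B z Q))"

text \<open>A = { Q + z : z integer, Q good, Q + z in B }; Q + z with z = -k means
  the element x with x + k = Q.\<close>

definition A_univ :: "'a struc \<Rightarrow> 'a \<Rightarrow> 'a set" where
  "A_univ B \<Delta> = {x \<in> univ B. \<exists>Q. good B \<Delta> Q \<and>
      (\<exists>k::nat. x = pl B Q (num B k) \<or> pl B x (num B k) = Q)}"

definition substructure :: "'a set \<Rightarrow> 'a struc \<Rightarrow> bool" where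
  "substructure A B \<longleftrightarrow> A \<subseteq> univ B \<and> zer B \<in> A \<and> on B \<in> A \<and>
     (\<forall>x\<in>A. \<forall>y\<in>A. pl B x y \<in> A \<and> tms B x y \<in> A)"

definition restrict_struc :: "'a struc \<Rightarrow> 'a set \<Rightarrow> 'a struc" where
  "restrict_struc B A = B\<lparr>univ := A\<rparr>"

text \<open>n*y in the language of Presburger arithmetic: y + ... + y (n times).\<close>

fun nsum :: "'a struc \<Rightarrow> nat \<Rightarrow> 'a \<Rightarrow> 'a" where
  "nsum M 0 y = zer M"
| "nsum M (Suc n) y = pl M (nsum M n y) y"

definition presburger :: "'a struc \<Rightarrow> bool" where
  "presburger M \<longleftrightarrow>
     (\<forall>z\<in>univ M. zer M \<noteq> pl M z (on M)) \<and>
     (\<forall>x\<in>univ M. x \<noteq> zer M \<longrightarrow> (\<exists>z\<in>univ M. x = pl M z (on M))) \<and>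
     (\<forall>x\<in>univ M. \<forall>y\<in>univ M. \<forall>z\<in>univ M. pl M x z = pl M y z \<longrightarrow> x = y) \<and>
     (\<forall>x\<in>univ M. pl M x (zer M) = x) \<and>
     (\<forall>x\<in>univ M. \<forall>y\<in>univ M. \<forall>z\<in>univ M. pl M (pl M x y) z = pl M x (pl M y z)) \<and>
     (\<forall>x\<in>univ M. \<forall>y\<in>univ M. pl M x y = pl M y x) \<and>
     (\<forall>x\<in>univ M. \<forall>y\<in>univ M. le M x y \<longleftrightarrow> (\<exists>z\<in>univ M. pl M x z = y)) \<and>
     (\<forall>n::nat. 0 < n \<longrightarrow> (\<forall>x\<in>univ M. \<exists>y\<in>univ M.
        le M (nsum M n y) x \<and> le M x (nsum M n (pl M y (on M))) \<and>
        x \<noteq> nsum M n (pl M y (on M))))"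

end

theory Submission
  imports Defs "HOL-Number_Theory.Cong"
begin

text \<open>
  Every first-order fact about \<open>\<nat>\<close> used below transfers to \<open>\<B>\<close>, so \<open>\<B>\<close> may be treated as a
  discretely ordered commutative semiring with a total exponential. Good elements are closed under addition,
  under multiplication by arbitrary elements and under subtraction, and, crucially, under
  division by a standard \<open>n > 0\<close>: if \<open>Q = n W\<close> then \<open>2\<^bsup>(m+1)\<Delta>\<^esup> \<bar> n W\<close>, and since the power of 2
  in \<open>n\<close> is below \<open>n \<le> \<Delta>\<close> this yields \<open>2\<^bsup>m\<Delta>\<^esup> \<bar> W\<close>. Writing the elements of \<open>A\<close> symmetrically
  as the \<open>x\<close> with \<open>x + a + j = b + j'\<close> for good \<open>a, b\<close> and standard \<open>j, j'\<close>, closure under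
  \<open>+\<close> and \<open>\<cdot>\<close> is a computation, subtraction stays in \<open>A\<close>, and division with remainder by a
  standard \<open>n\<close> stays in \<open>A\<close> because the quotient of a good element by \<open>n\<close> is good.
\<close>

definition Forall :: "nat \<Rightarrow> fm \<Rightarrow> fm" where "Forall x p = Neg (Ex x (Neg p))"
definition Imp :: "fm \<Rightarrow> fm \<Rightarrow> fm" where "Imp p q = Neg (Conj p (Neg q))"
definition Disj :: "fm \<Rightarrow> fm \<Rightarrow> fm" where "Disj p q = Neg (Conj (Neg p) (Neg q))"

fun Disjs :: "fm list \<Rightarrow> fm" where
  "Disjs [] = Neg (Eq Zero Zero)"
| "Disjs (p # ps) = Disj p (Disjs ps)"

fun Foralls :: "nat list \<Rightarrow> fm \<Rightarrow> fm" where
  "Foralls [] p = p"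
| "Foralls (x # xs) p = Forall x (Foralls xs p)"

notation Plus (infixl "\<oplus>" 65)
notation Times (infixl "\<otimes>" 70)
notation Eq (infix "\<doteq>" 50)
notation Le (infix "\<preceq>" 50)
notation Conj (infixr "\<sqinter>" 35)
notation Imp (infixr "\<Rrightarrow>" 25)
notation Disj (infixr "\<squnion>" 30)

lemma sat_Forall [simp]: "sat M e (Forall x p) \<longleftrightarrow> (\<forall>a\<in>univ M. sat M (e(x := a)) p)"
  by (simp add: Forall_def)

lemma sat_Imp [simp]: "sat M e (p \<Rrightarrow> q) \<longleftrightarrow> (sat M e p \<longrightarrow> sat M e q)"
  by (simp add: Imp_def)

lemma sat_Disj [simp]: "sat M e (p \<squnion> q) \<longleftrightarrow> sat M e p \<or> sat M e q"
  by (simp add: Disj_def)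

lemma sat_Disjs [simp]: "sat M e (Disjs ps) \<longleftrightarrow> (\<exists>p\<in>set ps. sat M e p)"
  by (induction ps) auto

lemma sat_Disjs_pairs:
  "sat M e (Disjs (concat (map (\<lambda>i. map (f i) [0..<K]) [0..<K]))) \<longleftrightarrow>
   (\<exists>i<K. \<exists>i'<K. sat M e (f i i'))"
proof
  assume "sat M e (Disjs (concat (map (\<lambda>i. map (f i) [0..<K]) [0..<K])))"
  then show "\<exists>i<K. \<exists>i'<K. sat M e (f i i')" by (auto; blast)
next
  assume "\<exists>i<K. \<exists>i'<K. sat M e (f i i')"
  then obtain i i' where "i < K" "i' < K" "sat M e (f i i')" by blast
  moreover have "f i i' \<in> set (concat (map (\<lambda>i. map (f i) [0..<K]) [0..<K]))"
    using \<open>i < K\<close> \<open>i' < K\<close> by (auto intro!: bexI[of _ i])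
  ultimately show "sat M e (Disjs (concat (map (\<lambda>i. map (f i) [0..<K]) [0..<K])))"
    by (metis sat_Disjs)
qed

lemma fv_Forall [simp]: "fv (Forall x p) = fv p - {x}" by (simp add: Forall_def)
lemma fv_Imp [simp]: "fv (p \<Rrightarrow> q) = fv p \<union> fv q" by (simp add: Imp_def)
lemma fv_Foralls: "fv (Foralls xs p) = fv p - set xs" by (induction xs) auto

lemma finite_fv_tm: "finite (fv_tm t)" by (induction t) auto
lemma finite_fv: "finite (fv p)" by (induction p) (auto simp: finite_fv_tm)

lemma eval_cong: "\<forall>v\<in>fv_tm t. e v = e' v \<Longrightarrow> eval M e t = eval M e' t"
  by (induction t) auto

lemma sat_cong: "\<forall>v\<in>fv p. e v = e' v \<Longrightarrow> sat M e p = sat M e' p"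
proof (induction p arbitrary: e e')
  case (Eq s t) then show ?case using eval_cong[of s e e' M] eval_cong[of t e e' M] by auto
next
  case (Le s t) then show ?case using eval_cong[of s e e' M] eval_cong[of t e e' M] by auto
next
  case (Conj p q)
  have "sat M e p = sat M e' p" by (rule Conj.IH(1)) (use Conj.prems in auto)
  moreover have "sat M e q = sat M e' q" by (rule Conj.IH(2)) (use Conj.prems in auto)
  ultimately show ?case by simp
next
  case (Ex x p)
  have "\<And>a. sat M (e(x := a)) p = sat M (e'(x := a)) p"
    by (rule Ex.IH) (use Ex.prems in auto)
  then show ?case by simp
qed auto

lemma sat_Foralls_valid: "(\<And>e. sat M e p) \<Longrightarrow> sat M e (Foralls xs p)"
  by (induction xs arbitrary: e) auto

lemma sat_Foralls_inst:
  assumes "sat M e (Foralls xs p)" and "\<forall>i\<in>set xs. e' i \<in> univ M"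
  shows "sat M (\<lambda>i. if i \<in> set xs then e' i else e i) p"
  using assms
proof (induction xs arbitrary: e)
  case (Cons x xs)
  have "sat M (e(x := e' x)) (Foralls xs p)" using Cons.prems by auto
  from Cons.IH[OF this] Cons.prems(2)
  have "sat M (\<lambda>i. if i \<in> set xs then e' i else (e(x := e' x)) i) p" by auto
  moreover have "(\<lambda>i. if i \<in> set xs then e' i else (e(x := e' x)) i) =
      (\<lambda>i. if i \<in> set (x # xs) then e' i else e i)" by auto
  ultimately show ?case by simp
qed simp

section \<open>Transfer from the standard model\<close>

lemma Nat_struc_simps [simp]:
  "univ Nat_struc = UNIV" "zer Nat_struc = 0" "on Nat_struc = 1"
  "pl Nat_struc = (+)" "tms Nat_struc = (*)" "le Nat_struc = (\<le>)"
  by (simp_all add: Nat_struc_def)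

lemma model_ThN_wf: "model_ThN B \<Longrightarrow> wf_struc B"
  by (simp add: model_ThN_def)

text \<open>Apply the definition of \<open>model_ThN\<close> to the universal closure of \<open>p\<close>.\<close>

lemma sat_of_valid_Nat:
  assumes B: "model_ThN B" and valid: "\<And>e. sat Nat_struc e p" and e: "\<And>i. e i \<in> univ B"
  shows "sat B e p"
proof -
  obtain xs where xs: "set xs = fv p" using finite_list[OF finite_fv[of p]] by blast
  have "fv (Foralls xs p) = {}" by (simp add: fv_Foralls xs)
  moreover have "sat Nat_struc (\<lambda>_. 0) (Foralls xs p)" by (rule sat_Foralls_valid[OF valid])
  ultimately have "sat B (\<lambda>_. zer B) (Foralls xs p)" using B by (simp add: model_ThN_def)
  then have "sat B (\<lambda>i. if i \<in> set xs then e i else zer B) p"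
    by (rule sat_Foralls_inst) (simp add: e)
  moreover have "sat B (\<lambda>i. if i \<in> set xs then e i else zer B) p = sat B e p"
    by (rule sat_cong) (simp add: xs)
  ultimately show ?thesis by simp
qed

definition env_of_list :: "'a struc \<Rightarrow> 'a list \<Rightarrow> nat \<Rightarrow> 'a" where
  "env_of_list M xs i = (if i < length xs then xs ! i else zer M)"

lemma sat_env_of_list_of_valid_Nat:
  assumes B: "model_ThN B" and valid: "\<And>e. sat Nat_struc e p" and xs: "set xs \<subseteq> univ B"
  shows "sat B (env_of_list B xs) p"
proof (rule sat_of_valid_Nat[OF B valid])
  have "zer B \<in> univ B" using model_ThN_wf[OF B] by (simp add: wf_struc_def)
  then show "env_of_list B xs i \<in> univ B" for i using xs by (auto simp: env_of_list_def)
qed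

fun numt :: "nat \<Rightarrow> tm" where
  "numt 0 = Zero"
| "numt (Suc k) = numt k \<oplus> One"

fun nsumt :: "nat \<Rightarrow> tm \<Rightarrow> tm" where
  "nsumt 0 t = Zero"
| "nsumt (Suc n) t = nsumt n t \<oplus> t"

lemma eval_numt [simp]: "eval M e (numt k) = num M k" by (induction k) auto
lemma eval_nsumt [simp]: "eval M e (nsumt n t) = nsum M n (eval M e t)" by (induction n) auto
lemma num_Nat_struc [simp]: "num Nat_struc k = k" by (induction k) auto
lemma nsum_Nat_struc [simp]: "nsum Nat_struc n y = n * y" by (induction n) auto

lemma num_in_univ: "wf_struc B \<Longrightarrow> num B k \<in> univ B"
  by (induction k) (auto simp: wf_struc_def)

lemma nsum_in_univ: "wf_struc B \<Longrightarrow> y \<in> univ B \<Longrightarrow> nsum B n y \<in> univ B"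
  by (induction n) (auto simp: wf_struc_def)

fun max_var :: "tm \<Rightarrow> nat" where
  "max_var (Var i) = i"
| "max_var Zero = 0"
| "max_var One = 0"
| "max_var (s \<oplus> t) = max (max_var s) (max_var t)"
| "max_var (s \<otimes> t) = max (max_var s) (max_var t)"

lemma max_var_numt [simp]: "max_var (numt k) = 0" by (induction k) auto

lemma le_max_var: "v \<in> fv_tm t \<Longrightarrow> v \<le> max_var t" by (induction t) auto

lemma eval_upd_fresh [simp]: "max_var t < v \<Longrightarrow> eval M (e(v := a)) t = eval M e t"
  by (induction t) auto

definition Dvd :: "tm \<Rightarrow> tm \<Rightarrow> nat \<Rightarrow> fm" where "Dvd d q w = Ex w (d \<otimes> Var w \<doteq> q)"

lemma sat_Dvd [simp]:
  "max_var d < w \<Longrightarrow> max_var q < w \<Longrightarrow>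
   sat M e (Dvd d q w) \<longleftrightarrow> dvd_in M (eval M e d) (eval M e q)"
  by (simp add: Dvd_def dvd_in_def)

lemma dvd_in_Nat_struc [simp]: "dvd_in Nat_struc d q \<longleftrightarrow> d dvd q"
  by (auto simp: dvd_in_def dvd_def eq_commute)

section \<open>A formula defining exponentiation\<close>

text \<open>Goedel's \<open>\<beta>\<close>-function: \<open>z = x\<^sup>y\<close> iff some \<open>p, q\<close> code a sequence \<open>s\<^sub>0, \<dots>, s\<^sub>y\<close> with
  \<open>s\<^sub>0 = 1\<close>, \<open>s\<^sub>i\<^sub>+\<^sub>1 = s\<^sub>i x\<close> and \<open>s\<^sub>y = z\<close>, where \<open>s\<^sub>i = p mod (1 + (i+1) q)\<close>.\<close>

definition beta_rem :: "'a struc \<Rightarrow> 'a \<Rightarrow> 'a \<Rightarrow> 'a \<Rightarrow> 'a \<Rightarrow> bool" where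
  "beta_rem M p q i r \<longleftrightarrow>
     (\<exists>t\<in>univ M. p = pl M (tms M t (pl M (on M) (tms M (pl M i (on M)) q))) r \<and>
        le M (pl M r (on M)) (pl M (on M) (tms M (pl M i (on M)) q)))"

definition beta_exp :: "'a struc \<Rightarrow> 'a \<Rightarrow> 'a \<Rightarrow> 'a \<Rightarrow> bool" where
  "beta_exp M x y z \<longleftrightarrow> (\<exists>p\<in>univ M. \<exists>q\<in>univ M.
     beta_rem M p q (zer M) (on M) \<and> beta_rem M p q y z \<and>
     (\<forall>i\<in>univ M. le M (pl M i (on M)) y \<longrightarrow>
        (\<exists>u\<in>univ M. beta_rem M p q i u \<and> beta_rem M p q (pl M i (on M)) (tms M u x))))"

definition Beta_rem :: "nat \<Rightarrow> tm \<Rightarrow> tm \<Rightarrow> tm \<Rightarrow> tm \<Rightarrow> fm" where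
  "Beta_rem w p q i r =
     Ex w ((p \<doteq> Var w \<otimes> (One \<oplus> (i \<oplus> One) \<otimes> q) \<oplus> r) \<sqinter> (r \<oplus> One \<preceq> One \<oplus> (i \<oplus> One) \<otimes> q))"

lemma sat_Beta_rem [simp]:
  assumes "max_var p < w" "max_var q < w" "max_var i < w" "max_var r < w"
  shows "sat M e (Beta_rem w p q i r) \<longleftrightarrow>
    beta_rem M (eval M e p) (eval M e q) (eval M e i) (eval M e r)"
  using assms by (simp add: Beta_rem_def beta_rem_def)

definition Exp_from :: "nat \<Rightarrow> tm \<Rightarrow> tm \<Rightarrow> tm \<Rightarrow> fm" where
  "Exp_from b x y z = (let R = Beta_rem (b + 4) (Var b) (Var (b + 1))
     in Ex b (Ex (b + 1) (R Zero One \<sqinter> R y z \<sqinter>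
          Forall (b + 2) (Var (b + 2) \<oplus> One \<preceq> y \<Rrightarrow>
            Ex (b + 3) (R (Var (b + 2)) (Var (b + 3)) \<sqinter> R (Var (b + 2) \<oplus> One) (Var (b + 3) \<otimes> x))))))"

lemma sat_Exp_from:
  "max_var x < b \<Longrightarrow> max_var y < b \<Longrightarrow> max_var z < b \<Longrightarrow>
   sat M e (Exp_from b x y z) \<longleftrightarrow> beta_exp M (eval M e x) (eval M e y) (eval M e z)"
  by (simp add: Exp_from_def Let_def beta_exp_def)

text \<open>The bound variables of \<open>Exp_from b\<close> are \<open>b, \<dots>, b + 4\<close>, so they must lie above those of \<open>x, y, z\<close>.\<close>

definition Exp :: "tm \<Rightarrow> tm \<Rightarrow> tm \<Rightarrow> fm" where
  "Exp x y z = Exp_from (Suc (max (max_var x) (max (max_var y) (max_var z)))) x y z"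

lemma sat_Exp [simp]: "sat M e (Exp x y z) \<longleftrightarrow> beta_exp M (eval M e x) (eval M e y) (eval M e z)"
  unfolding Exp_def by (rule sat_Exp_from) auto

lemma fv_Exp: "fv (Exp x y z) \<subseteq> fv_tm x \<union> fv_tm y \<union> fv_tm z"
  using le_max_var[of _ x] le_max_var[of _ y] le_max_var[of _ z]
  by (auto simp: Exp_def Exp_from_def Let_def Beta_rem_def)

lemma beta_rem_Nat_struc: "beta_rem Nat_struc p q i r \<longleftrightarrow> r = p mod (1 + (i + 1) * q)"
proof -
  let ?m = "1 + (i + 1) * q"
  have "beta_rem Nat_struc p q i r \<longleftrightarrow> (\<exists>t. p = t * ?m + r \<and> r < ?m)"
    by (simp add: beta_rem_def Suc_le_eq)
  also have "\<dots> \<longleftrightarrow> r = p mod ?m"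
  proof
    assume "\<exists>t. p = t * ?m + r \<and> r < ?m"
    then obtain t where p: "p = t * ?m + r" and "r < ?m" by blast
    have "p mod ?m = r mod ?m" unfolding p by (rule mod_mult_self3)
    with \<open>r < ?m\<close> show "r = p mod ?m" by simp
  next
    assume r: "r = p mod ?m"
    have "p = p div ?m * ?m + p mod ?m" by (rule div_mult_mod_eq[symmetric])
    moreover have "p mod ?m < ?m" by (rule mod_less_divisor) simp
    ultimately show "\<exists>t. p = t * ?m + r \<and> r < ?m" unfolding r by blast
  qed
  finally show ?thesis .
qed

lemma beta_exp_imp_power:
  assumes "beta_exp Nat_struc x y z" shows "z = x ^ y"
proof -
  from assms obtain p q where
    start: "1 = p mod (1 + (0 + 1) * q)" and final: "z = p mod (1 + (y + 1) * q)" and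
    step: "\<forall>i. i + 1 \<le> y \<longrightarrow>
      (\<exists>u. u = p mod (1 + (i + 1) * q) \<and> u * x = p mod (1 + (i + 1 + 1) * q))"
    unfolding beta_exp_def beta_rem_Nat_struc Nat_struc_simps by blast
  have "i \<le> y \<Longrightarrow> p mod (1 + (i + 1) * q) = x ^ i" for i
  proof (induction i)
    case 0 then show ?case using start[symmetric] by simp
  next
    case (Suc i)
    then show ?case using step by (auto simp: mult.commute)
  qed
  then show ?thesis using final by simp
qed

lemma beta_moduli_coprime:
  fixes K :: nat
  assumes ij: "i < j" "j \<le> K"
  shows "coprime (1 + (i + 1) * fact K) (1 + (j + 1) * fact K)"
proof -
  define q where "q = (fact K :: nat)"
  let ?d = "gcd (1 + (i + 1) * q) (1 + (j + 1) * q)"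
  have "(j + 1) * (1 + (i + 1) * q) = (i + 1) * (1 + (j + 1) * q) + (j - i)"
    using ij by (simp add: algebra_simps)
  moreover have "?d dvd (j + 1) * (1 + (i + 1) * q)" by (rule dvd_mult) (rule gcd_dvd1)
  ultimately have "?d dvd (i + 1) * (1 + (j + 1) * q) + (j - i)" by metis
  moreover have "?d dvd (i + 1) * (1 + (j + 1) * q)" by (rule dvd_mult) (rule gcd_dvd2)
  ultimately have "?d dvd j - i" by (metis dvd_add_right_iff)
  then have "?d \<le> j - i" using ij by (simp add: dvd_imp_le)
  then have "?d dvd fact K" using ij by (intro dvd_fact) (auto simp: Suc_le_eq)
  then have "?d dvd (i + 1) * q" unfolding q_def by simp
  moreover have "?d dvd 1 + (i + 1) * q" by simp
  ultimately have "?d dvd 1" by (metis dvd_add_right_iff add.commute)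
  then show ?thesis unfolding q_def by (simp add: coprime_iff_gcd_eq_1)
qed

text \<open>The moduli \<open>1 + (i+1) K!\<close> for \<open>i \<le> y \<le> K\<close> are pairwise coprime and exceed every \<open>x\<^sup>i\<close>, so the
  Chinese remainder theorem supplies the code \<open>p\<close>.\<close>

lemma power_imp_beta_exp:
  assumes "z = x ^ y" shows "beta_exp Nat_struc x y z"
proof -
  define K where "K = y + x ^ y + 2"
  define q where "q = (fact K :: nat)"
  define m where "m i = 1 + (i + 1) * q" for i
  have "\<forall>i\<in>{..y}. \<forall>j\<in>{..y}. i \<noteq> j \<longrightarrow> coprime (m i) (m j)"
  proof (intro ballI impI)
    fix i j assume "i \<in> {..y}" "j \<in> {..y}" "i \<noteq> j"
    then show "coprime (m i) (m j)"
      using beta_moduli_coprime[of i j K] beta_moduli_coprime[of j i K]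
      unfolding m_def q_def K_def by (cases "i < j") (auto simp: coprime_commute)
  qed
  then obtain p where p: "\<forall>i\<in>{..y}. [p = x ^ i] (mod m i)"
    using chinese_remainder_nat[OF finite_atMost] by blast
  have p_mod: "p mod m i = x ^ i" if "i \<le> y" for i
  proof -
    have "x ^ i \<le> x ^ y + 1"
      using that by (cases "x = 0") (auto simp: power_0_left intro!: le_SucI power_increasing)
    also have "\<dots> < K" unfolding K_def by simp
    also have "K \<le> q" unfolding q_def by (rule fact_ge_self)
    also have "q < m i" unfolding m_def by simp
    finally show ?thesis using p that by (simp add: cong_def)
  qed
  show ?thesis
    unfolding beta_exp_def beta_rem_Nat_struc Nat_struc_simps
  proof (rule bexI[of _ p], rule bexI[of _ q], intro conjI ballI impI)
    show "1 = p mod (1 + (0 + 1) * q)" using p_mod[of 0] by (simp add: m_def)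
    show "z = p mod (1 + (y + 1) * q)" using p_mod[of y] assms by (simp add: m_def)
    fix i assume "i + 1 \<le> y"
    then show "\<exists>u\<in>UNIV. u = p mod (1 + (i + 1) * q) \<and> u * x = p mod (1 + (i + 1 + 1) * q)"
      using p_mod[of i] p_mod[of "i + 1"] by (simp add: m_def mult.commute)
  qed auto
qed

lemma beta_exp_Nat_struc [simp]: "beta_exp Nat_struc x y z \<longleftrightarrow> z = x ^ y"
  using beta_exp_imp_power power_imp_beta_exp by blast

section \<open>Arithmetic in a model of \<open>Th(\<nat>)\<close>\<close>

locale ThN_model =
  fixes B :: "'a struc"
  assumes model: "model_ThN B"
begin

lemma wf: "wf_struc B" using model_ThN_wf[OF model] .

lemma zer_in [simp]: "zer B \<in> univ B"
  and on_in [simp]: "on B \<in> univ B"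
  and pl_in [simp]: "x \<in> univ B \<Longrightarrow> y \<in> univ B \<Longrightarrow> pl B x y \<in> univ B"
  and tms_in [simp]: "x \<in> univ B \<Longrightarrow> y \<in> univ B \<Longrightarrow> tms B x y \<in> univ B"
  using wf by (auto simp: wf_struc_def)

lemma num_in [simp]: "num B k \<in> univ B" using num_in_univ[OF wf] .
lemma nsum_in [simp]: "y \<in> univ B \<Longrightarrow> nsum B n y \<in> univ B" using nsum_in_univ[OF wf] .

lemma sat_from_Nat: "(\<And>e. sat Nat_struc e p) \<Longrightarrow> set xs \<subseteq> univ B \<Longrightarrow> sat B (env_of_list B xs) p"
  by (rule sat_env_of_list_of_valid_Nat[OF model])

lemma pl_zer:
  assumes "x \<in> univ B" shows "pl B x (zer B) = x"
proof -
  have "sat B (env_of_list B [x]) (Var 0 \<oplus> Zero \<doteq> Var 0)"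
    by (rule sat_from_Nat) (use assms in auto)
  then show ?thesis using assms by (auto simp: env_of_list_def)
qed

lemma zer_pl:
  assumes "x \<in> univ B" shows "pl B (zer B) x = x"
proof -
  have "sat B (env_of_list B [x]) (Zero \<oplus> Var 0 \<doteq> Var 0)"
    by (rule sat_from_Nat) (use assms in auto)
  then show ?thesis using assms by (auto simp: env_of_list_def)
qed

lemma pl_commute:
  assumes "x \<in> univ B" "y \<in> univ B" shows "pl B x y = pl B y x"
proof -
  have "sat B (env_of_list B [x, y]) (Var 0 \<oplus> Var 1 \<doteq> Var 1 \<oplus> Var 0)"
    by (rule sat_from_Nat) (use assms in auto)
  then show ?thesis using assms by (auto simp: env_of_list_def)
qed

lemma pl_assoc:
  assumes "x \<in> univ B" "y \<in> univ B" "z \<in> univ B"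
  shows "pl B (pl B x y) z = pl B x (pl B y z)"
proof -
  have "sat B (env_of_list B [x, y, z]) ((Var 0 \<oplus> Var 1) \<oplus> Var 2 \<doteq> Var 0 \<oplus> (Var 1 \<oplus> Var 2))"
    by (rule sat_from_Nat) (use assms in auto)
  then show ?thesis using assms by (auto simp: env_of_list_def)
qed

lemma pl_right_cancel:
  assumes "x \<in> univ B" "y \<in> univ B" "z \<in> univ B" "pl B x z = pl B y z"
  shows "x = y"
proof -
  have "sat B (env_of_list B [x, y, z]) (Var 0 \<oplus> Var 2 \<doteq> Var 1 \<oplus> Var 2 \<Rrightarrow> Var 0 \<doteq> Var 1)"
    by (rule sat_from_Nat) (use assms in auto)
  then show ?thesis using assms by (auto simp: env_of_list_def)
qed

lemma zer_neq_pl_on: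
  assumes "z \<in> univ B" shows "zer B \<noteq> pl B z (on B)"
proof -
  have "sat B (env_of_list B [z]) (Neg (Zero \<doteq> Var 0 \<oplus> One))"
    by (rule sat_from_Nat) (use assms in auto)
  then show ?thesis using assms by (auto simp: env_of_list_def)
qed

lemma exists_pred:
  assumes "x \<in> univ B" "x \<noteq> zer B" shows "\<exists>z\<in>univ B. x = pl B z (on B)"
proof -
  have "sat B (env_of_list B [x]) (Neg (Var 0 \<doteq> Zero) \<Rrightarrow> Ex 1 (Var 0 \<doteq> Var 1 \<oplus> One))"
    by (rule sat_from_Nat) (use assms in \<open>auto, presburger\<close>)
  then show ?thesis using assms by (auto simp: env_of_list_def)
qed

lemma le_iff_pl:
  assumes "x \<in> univ B" "y \<in> univ B" shows "le B x y \<longleftrightarrow> (\<exists>z\<in>univ B. pl B x z = y)"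
proof -
  have "sat B (env_of_list B [x, y]) ((Var 0 \<preceq> Var 1 \<Rrightarrow> Ex 2 (Var 0 \<oplus> Var 2 \<doteq> Var 1)) \<sqinter>
      (Ex 2 (Var 0 \<oplus> Var 2 \<doteq> Var 1) \<Rrightarrow> Var 0 \<preceq> Var 1))"
    by (rule sat_from_Nat) (use assms in \<open>auto dest!: le_Suc_ex\<close>)
  then show ?thesis using assms by (auto simp: env_of_list_def)
qed

lemma le_total:
  assumes "x \<in> univ B" "y \<in> univ B" shows "le B x y \<or> le B y x"
proof -
  have "sat B (env_of_list B [x, y]) (Var 0 \<preceq> Var 1 \<squnion> Var 1 \<preceq> Var 0)"
    by (rule sat_from_Nat) (use assms in auto)
  then show ?thesis using assms by (auto simp: env_of_list_def)
qed

lemma num_le_or_eq_num: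
  assumes "x \<in> univ B" shows "le B (num B K) x \<or> (\<exists>i\<le>K. x = num B i)"
proof -
  have "sat B (env_of_list B [x]) (numt K \<preceq> Var 0 \<squnion> Disjs (map (\<lambda>i. Var 0 \<doteq> numt i) [0..<K+1]))"
    by (rule sat_from_Nat) (use assms in auto)
  then show ?thesis
    by (simp add: env_of_list_def) (metis atLeastLessThan_iff less_imp_le_nat order_refl)
qed

lemma tms_zer:
  assumes "x \<in> univ B" shows "tms B x (zer B) = zer B"
proof -
  have "sat B (env_of_list B [x]) (Var 0 \<otimes> Zero \<doteq> Zero)"
    by (rule sat_from_Nat) (use assms in auto)
  then show ?thesis using assms by (auto simp: env_of_list_def)
qed

lemma beta_exp_total:
  assumes "x \<in> univ B" "y \<in> univ B" shows "\<exists>z\<in>univ B. beta_exp B x y z"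
proof -
  have "sat B (env_of_list B [x, y]) (Ex 2 (Exp (Var 0) (Var 1) (Var 2)))"
    by (rule sat_from_Nat) (use assms in auto)
  then show ?thesis using assms by (auto simp: env_of_list_def)
qed

lemma beta_exp_unique:
  assumes "x \<in> univ B" "y \<in> univ B" "z \<in> univ B" "z' \<in> univ B"
    and "beta_exp B x y z" "beta_exp B x y z'"
  shows "z = z'"
proof -
  have "sat B (env_of_list B [x, y, z, z']) (Exp (Var 0) (Var 1) (Var 2) \<sqinter> Exp (Var 0) (Var 1) (Var 3) \<Rrightarrow> Var 2 \<doteq> Var 3)"
    by (rule sat_from_Nat) (use assms in auto)
  then show ?thesis using assms by (auto simp: env_of_list_def)
qed

text \<open>Any formula defining exponentiation in \<open>\<nat>\<close> is equivalent there to \<open>Exp\<close>, and this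
  equivalence transfers to \<open>B\<close>.\<close>

lemma exp_rel_iff_beta_exp:
  assumes xyz: "x \<in> univ B" "y \<in> univ B" "z \<in> univ B"
  shows "exp_rel B x y z \<longleftrightarrow> beta_exp B x y z"
proof
  assume "exp_rel B x y z"
  then obtain \<phi> where \<phi>: "defines_exp \<phi>" and sat_\<phi>: "sat B (env3 B x y z) \<phi>"
    unfolding exp_rel_def by blast
  have "sat B (env3 B x y z) (\<phi> \<Rrightarrow> Exp (Var 0) (Var 1) (Var 2))"
  proof (rule sat_of_valid_Nat[OF model])
    fix e :: "nat \<Rightarrow> nat"
    have "sat Nat_struc e \<phi> = sat Nat_struc (env3 Nat_struc (e 0) (e 1) (e 2)) \<phi>"
      by (rule sat_cong) (use \<phi> in \<open>auto simp: defines_exp_def env3_def\<close>)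
    then show "sat Nat_struc e (\<phi> \<Rrightarrow> Exp (Var 0) (Var 1) (Var 2))"
      using \<phi> by (simp add: defines_exp_def)
  qed (use xyz in \<open>simp add: env3_def\<close>)
  with sat_\<phi> show "beta_exp B x y z" by (simp add: env3_def)
next
  assume "beta_exp B x y z"
  moreover have "defines_exp (Exp (Var 0) (Var 1) (Var 2))"
    using fv_Exp[of "Var 0" "Var 1" "Var 2"] by (auto simp: defines_exp_def env3_def)
  ultimately show "exp_rel B x y z"
    unfolding exp_rel_def by (intro exI[of _ "Exp (Var 0) (Var 1) (Var 2)"]) (simp add: env3_def)
qed

lemma dvd_in_pl:
  assumes "d \<in> univ B" "a \<in> univ B" "b \<in> univ B" "dvd_in B d a" "dvd_in B d b"
  shows "dvd_in B d (pl B a b)"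
proof -
  have "sat B (env_of_list B [d, a, b]) (Dvd (Var 0) (Var 1) 3 \<sqinter> Dvd (Var 0) (Var 2) 3 \<Rrightarrow> Dvd (Var 0) (Var 1 \<oplus> Var 2) 3)"
    by (rule sat_from_Nat) (use assms in \<open>auto intro: dvd_add\<close>)
  then show ?thesis using assms by (simp add: env_of_list_def)
qed

lemma dvd_in_tms:
  assumes "d \<in> univ B" "a \<in> univ B" "x \<in> univ B" "dvd_in B d a"
  shows "dvd_in B d (tms B x a)"
proof -
  have "sat B (env_of_list B [d, a, x]) (Dvd (Var 0) (Var 1) 3 \<Rrightarrow> Dvd (Var 0) (Var 2 \<otimes> Var 1) 3)"
    by (rule sat_from_Nat) (use assms in \<open>auto intro: dvd_mult\<close>)
  then show ?thesis using assms by (simp add: env_of_list_def)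
qed

lemma dvd_in_diff:
  assumes "d \<in> univ B" "a \<in> univ B" "b \<in> univ B" "r \<in> univ B"
    and "dvd_in B d a" "dvd_in B d b" "pl B r b = a"
  shows "dvd_in B d r"
proof -
  have "sat B (env_of_list B [d, a, b, r]) (Dvd (Var 0) (Var 1) 4 \<sqinter> Dvd (Var 0) (Var 2) 4 \<sqinter> (Var 3 \<oplus> Var 2 \<doteq> Var 1)
      \<Rrightarrow> Dvd (Var 0) (Var 3) 4)"
  proof (rule sat_from_Nat)
    show "sat Nat_struc e (Dvd (Var 0) (Var 1) 4 \<sqinter> Dvd (Var 0) (Var 2) 4 \<sqinter> (Var 3 \<oplus> Var 2 \<doteq> Var 1)
      \<Rrightarrow> Dvd (Var 0) (Var 3) 4)" for e
      by (auto simp del: dvd_add_left_iff) (metis dvd_add_left_iff)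
  qed (use assms in simp)
  then show ?thesis using assms by (simp add: env_of_list_def)
qed

lemma dvd_in_zer: "d \<in> univ B \<Longrightarrow> dvd_in B d (zer B)"
  unfolding dvd_in_def using tms_zer by force

end

section \<open>Elements divisible by all standard \<open>n\<close> and all \<open>2\<^bsup>n\<Delta>\<^esup>\<close>\<close>

text \<open>The power of 2 dividing \<open>n\<close> is below \<open>n\<close>.\<close>

lemma pow2_dvd_mult_cancel:
  fixes W :: nat
  assumes "0 < n" and "2 ^ (k + n) dvd n * W"
  shows "2 ^ k dvd W"
  using assms
proof (induction n rule: less_induct)
  case (less n)
  show ?case
  proof (cases "even n")
    case False
    have "2 ^ k dvd (2::nat) ^ (k + n)" by (simp add: power_add)
    then have "2 ^ k dvd n * W" using less.prems(2) dvd_trans by blast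
    moreover have "coprime ((2::nat) ^ k) n" using False by simp
    ultimately show ?thesis using coprime_dvd_mult_right_iff by blast
  next
    case True
    then obtain m where n: "n = 2 * m" by blast
    with less.prems have m: "0 < m" "m < n" by auto
    have "2 ^ (k + n) = 2 * (2::nat) ^ (k + 2 * m - 1)" using n m by (simp add: power_eq_if)
    with less.prems(2) n have "2 ^ (k + 2 * m - 1) dvd m * W" by (simp add: mult.assoc)
    moreover have "(2::nat) ^ (k + m) dvd 2 ^ (k + 2 * m - 1)" using m by (simp add: le_imp_power_dvd)
    ultimately have "2 ^ (k + m) dvd m * W" using dvd_trans by blast
    then show ?thesis using less.IH[OF m(2) m(1)] by blast
  qed
qed

lemma quotient_inherits_divisors_nat:
  fixes W :: nat
  assumes "0 < n" "m * n dvd n * W" "2 ^ ((m + 1) * D) dvd n * W" "n \<le> D"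
  shows "m dvd W \<and> 2 ^ (m * D) dvd W"
proof
  have "m * n dvd W * n" using assms(2) by (simp add: mult.commute)
  then show "m dvd W" using assms(1) by (simp add: dvd_mult_cancel2)
  have "2 ^ (m * D + n) dvd (2::nat) ^ ((m + 1) * D)" using assms(4) by (simp add: le_imp_power_dvd)
  then have "2 ^ (m * D + n) dvd n * W" using assms(3) dvd_trans by blast
  then show "2 ^ (m * D) dvd W" using pow2_dvd_mult_cancel[OF assms(1)] by blast
qed

locale ThN_model_nonstd = ThN_model +
  fixes \<Delta> :: 'a
  assumes nonstandard: "nonstandard_elt B \<Delta>"
begin

lemma Delta_in [simp]: "\<Delta> \<in> univ B" using nonstandard by (simp add: nonstandard_elt_def)

lemma num_le_Delta: "le B (num B n) \<Delta>"
  using num_le_or_eq_num[OF Delta_in, of n] nonstandard by (auto simp: nonstandard_elt_def)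

definition pow2_Delta :: "nat \<Rightarrow> 'a" where
  "pow2_Delta n = (SOME z. z \<in> univ B \<and> beta_exp B (num B 2) (tms B (num B n) \<Delta>) z)"

lemma pow2_Delta: "pow2_Delta n \<in> univ B \<and> beta_exp B (num B 2) (tms B (num B n) \<Delta>) (pow2_Delta n)"
  unfolding pow2_Delta_def by (rule someI_ex) (use beta_exp_total[of "num B 2" "tms B (num B n) \<Delta>"] in auto)

lemma pow2_Delta_in [simp]: "pow2_Delta n \<in> univ B" using pow2_Delta by blast

lemma exp_rel_pow2_Delta_iff:
  "z \<in> univ B \<Longrightarrow> exp_rel B (num B 2) (tms B (num B n) \<Delta>) z \<longleftrightarrow> z = pow2_Delta n"
  using exp_rel_iff_beta_exp beta_exp_unique pow2_Delta by (metis Delta_in tms_in num_in)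

lemma good_iff: "good B \<Delta> Q \<longleftrightarrow>
  Q \<in> univ B \<and> (\<forall>n>0. dvd_in B (num B n) Q \<and> dvd_in B (pow2_Delta n) Q)"
  unfolding good_def using exp_rel_pow2_Delta_iff by auto

lemma good_in_univ: "good B \<Delta> Q \<Longrightarrow> Q \<in> univ B" by (simp add: good_iff)

lemma good_zer: "good B \<Delta> (zer B)" by (simp add: good_iff dvd_in_zer)

lemma good_pl: "good B \<Delta> a \<Longrightarrow> good B \<Delta> b \<Longrightarrow> good B \<Delta> (pl B a b)"
  by (simp add: good_iff dvd_in_pl)

lemma good_tms: "x \<in> univ B \<Longrightarrow> good B \<Delta> a \<Longrightarrow> good B \<Delta> (tms B x a)"
  by (simp add: good_iff dvd_in_tms)

lemma good_diff: "r \<in> univ B \<Longrightarrow> good B \<Delta> a \<Longrightarrow> good B \<Delta> b \<Longrightarrow> pl B r b = a \<Longrightarrow> good B \<Delta> r"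
  unfolding good_iff by (meson dvd_in_diff num_in pow2_Delta_in)

text \<open>This is where \<open>\<Delta>\<close> being nonstandard (hence \<open>n \<le> \<Delta>\<close>) enters.\<close>

lemma good_quotient_num:
  assumes Q: "good B \<Delta> Q" and n: "0 < n"
  obtains W where "W \<in> univ B" "tms B (num B n) W = Q" "good B \<Delta> W"
proof -
  obtain W where W: "W \<in> univ B" "tms B (num B n) W = Q"
    using Q n by (auto simp: good_iff dvd_in_def)
  have "good B \<Delta> W"
    unfolding good_iff
  proof (rule conjI[OF W(1)], intro allI impI)
    fix m :: nat assume m: "0 < m"
    let ?\<phi> = "(numt n \<otimes> Var 3 \<doteq> Var 0) \<sqinter> Dvd (numt (m * n)) (Var 0) 4 \<sqinter>
      Exp (numt 2) (numt (m + 1) \<otimes> Var 1) (Var 2) \<sqinter> Dvd (Var 2) (Var 0) 4 \<sqinter> (numt n \<preceq> Var 1)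
      \<Rrightarrow> Dvd (numt m) (Var 3) 4 \<sqinter> Ex 5 (Exp (numt 2) (numt m \<otimes> Var 1) (Var 5) \<sqinter> Dvd (Var 5) (Var 3) 6)"
    have "sat B (env_of_list B [Q, \<Delta>, pow2_Delta (m + 1), W]) ?\<phi>"
    proof (rule sat_from_Nat)
      fix e :: "nat \<Rightarrow> nat"
      have "m dvd e 3 \<and> 2 ^ (m * e 1) dvd e 3"
        if "n * e 3 = e 0" "m * n dvd e 0" "2 ^ ((m + 1) * e 1) dvd e 0" "n \<le> e 1"
        by (rule quotient_inherits_divisors_nat[OF n]) (use that in simp_all)
      then show "sat Nat_struc e ?\<phi>" by auto
    qed (use Q W in \<open>simp add: good_in_univ\<close>)
    moreover have "dvd_in B (num B (m * n)) Q" "dvd_in B (pow2_Delta (m + 1)) Q"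
      using Q m n by (simp_all add: good_iff)
    ultimately have "dvd_in B (num B m) W \<and>
        (\<exists>E\<in>univ B. beta_exp B (num B 2) (tms B (num B m) \<Delta>) E \<and> dvd_in B E W)"
      using W pow2_Delta[of "m + 1"] num_le_Delta[of n] by (simp add: env_of_list_def)
    then show "dvd_in B (num B m) W \<and> dvd_in B (pow2_Delta m) W"
      using exp_rel_pow2_Delta_iff exp_rel_iff_beta_exp by (metis Delta_in num_in tms_in)
  qed
  then show thesis using that W by blast
qed

end

section \<open>The universe of \<open>\<A>\<close>\<close>

text \<open>The product of \<open>x = b - a + (k\<^sub>1' - k\<^sub>1)\<close> and \<open>y = d - c + (k\<^sub>2' - k\<^sub>2)\<close> with both sides
  moved so that no subtraction occurs.\<close>

lemma mult_shifted_eq_nat: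
  fixes x y a b c d k1 k1' k2 k2' :: nat
  assumes "x + a + k1 = b + k1'" and "y + c + k2 = d + k2'"
  shows "x * y + (x * c + k2 * b + k2' * a) + (k2 * k1' + k2' * k1) =
    (x * d + k2' * b + k2 * a) + (k2' * k1' + k2 * k1)"
proof -
  have "int x + int a + int k1 = int b + int k1'" "int y + int c + int k2 = int d + int k2'"
    using assms by (simp_all only: of_nat_add[symmetric] of_nat_eq_iff)
  then have "int x * int y + (int x * int c + int k2 * int b + int k2' * int a) + (int k2 * int k1' + int k2' * int k1) =
    (int x * int d + int k2' * int b + int k2 * int a) + (int k2' * int k1' + int k2 * int k1)"
    by algebra
  then show ?thesis by (simp only: of_nat_add[symmetric] of_nat_mult[symmetric] of_nat_eq_iff)
qed

lemma div_mod_bounds_nat: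
  assumes "0 < (n::nat)"
  shows "\<exists>i\<in>{0..<n}. \<exists>a. x = i + a * n \<and> a * n \<le> x \<and> x \<le> n + a * n \<and> x \<noteq> n + a * n"
proof -
  define r q where "r = x mod n" and "q = x div n"
  have "x = r + q * n" "r < n" unfolding r_def q_def using assms by simp_all
  then show ?thesis by (intro bexI[of _ r] exI[of _ q]) auto
qed

lemma mult_cancel_shifted_nat:
  fixes n y W W' j j' :: nat
  assumes n: "0 < n" and eq: "n * y + n * W' + j = n * W + j'"
  shows "\<exists>i<j + j' + 1. \<exists>i'<j + j' + 1. y + W' + i = W + i'"
proof (cases "W \<le> y + W'")
  case True
  then obtain d where d: "y + W' = W + d" using le_Suc_ex by blast
  then have "n * y + n * W' = n * W + n * d" by (metis distrib_left)
  then have "n * d + j = j'" using eq by linarith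
  moreover have "d \<le> n * d" using n by simp
  ultimately have "d \<le> j'" by linarith
  then show ?thesis using d by (intro exI[of _ 0] exI[of _ d]) auto
next
  case False
  then obtain d where d: "W = y + W' + d" using le_Suc_ex nat_le_linear by blast
  then have "n * W = n * y + n * W' + n * d" by (metis distrib_left)
  then have "j = n * d + j'" using eq by linarith
  moreover have "d \<le> n * d" using n by simp
  ultimately have "d \<le> j" by linarith
  then show ?thesis using d by (intro exI[of _ d] exI[of _ 0]) auto
qed

context ThN_model_nonstd
begin

text \<open>A symmetric description of \<open>A_univ B \<Delta>\<close>, avoiding the case distinction between
  \<open>Q + k\<close> and \<open>Q - k\<close>.\<close>

definition A_sym :: "'a set" where
  "A_sym = {x \<in> univ B. \<exists>a b j j'. good B \<Delta> a \<and> good B \<Delta> b \<and>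
     pl B (pl B x a) (num B j) = pl B b (num B j')}"

lemma A_symI:
  "x \<in> univ B \<Longrightarrow> good B \<Delta> a \<Longrightarrow> good B \<Delta> b \<Longrightarrow>
   pl B (pl B x a) (num B j) = pl B b (num B j') \<Longrightarrow> x \<in> A_sym"
  unfolding A_sym_def by blast

lemma A_symE:
  assumes "x \<in> A_sym"
  obtains a b j j' where "x \<in> univ B" "good B \<Delta> a" "good B \<Delta> b"
    "pl B (pl B x a) (num B j) = pl B b (num B j')"
  using assms unfolding A_sym_def by blast

lemma A_sym_subset_univ: "A_sym \<subseteq> univ B" by (auto simp: A_sym_def)

lemma A_univ_subset_A_sym: "A_univ B \<Delta> \<subseteq> A_sym"
proof
  fix x assume "x \<in> A_univ B \<Delta>"
  then obtain Q k where x: "x \<in> univ B" and Q: "good B \<Delta> Q"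
    and "x = pl B Q (num B k) \<or> pl B x (num B k) = Q"
    unfolding A_univ_def by blast
  then consider "pl B (pl B x (zer B)) (num B 0) = pl B Q (num B k)"
    | "pl B (pl B x (zer B)) (num B k) = pl B Q (num B 0)"
    using good_in_univ[OF Q] by (auto simp: pl_zer)
  then show "x \<in> A_sym" using x Q good_zer by cases (blast intro: A_symI)+
qed

lemma A_sym_subset_A_univ: "A_sym \<subseteq> A_univ B \<Delta>"
proof
  fix x assume "x \<in> A_sym"
  then obtain a b j j' where x: "x \<in> univ B" and a: "good B \<Delta> a" and b: "good B \<Delta> b"
    and e: "pl B (pl B x a) (num B j) = pl B b (num B j')" by (rule A_symE)
  have ab: "a \<in> univ B" "b \<in> univ B" using a b good_in_univ by auto
  from le_total[OF ab] show "x \<in> A_univ B \<Delta>"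
  proof
    assume "le B a b"
    then obtain t where t: "t \<in> univ B" "pl B a t = b" using le_iff_pl ab by blast
    have "good B \<Delta> t" using good_diff[OF t(1) b a] t pl_commute ab by simp
    have "sat B (env_of_list B [x, a, b, t]) (((Var 0 \<oplus> Var 1) \<oplus> numt j \<doteq> Var 2 \<oplus> numt j') \<sqinter>
        (Var 1 \<oplus> Var 3 \<doteq> Var 2) \<Rrightarrow> (Var 0 \<doteq> Var 3 \<oplus> numt (j' - j)) \<squnion> (Var 0 \<oplus> numt (j - j') \<doteq> Var 3))"
      by (rule sat_from_Nat) (use x ab t in auto)
    then have "x = pl B t (num B (j' - j)) \<or> pl B x (num B (j - j')) = t"
      using e t by (simp add: env_of_list_def)
    then show ?thesis using x \<open>good B \<Delta> t\<close> unfolding A_univ_def by blast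
  next
    assume "le B b a"
    then obtain t where t: "t \<in> univ B" "pl B b t = a" using le_iff_pl ab by blast
    text \<open>Then \<open>x + t + j = j'\<close>, so \<open>x\<close> is standard.\<close>
    have "sat B (env_of_list B [x, a, b, t]) (((Var 0 \<oplus> Var 1) \<oplus> numt j \<doteq> Var 2 \<oplus> numt j') \<sqinter>
        (Var 2 \<oplus> Var 3 \<doteq> Var 1) \<Rrightarrow> Disjs (map (\<lambda>i. Var 0 \<doteq> Zero \<oplus> numt i) [0..<j' + 1]))"
      by (rule sat_from_Nat) (use x ab t in auto)
    then have "\<exists>i. x = pl B (zer B) (num B i)" using e t by (auto simp: env_of_list_def)
    then show ?thesis using x good_zer unfolding A_univ_def by blast
  qed
qed

lemma A_univ_eq_A_sym: "A_univ B \<Delta> = A_sym"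
  by (rule equalityI[OF A_univ_subset_A_sym A_sym_subset_A_univ])

lemma num_in_A_sym: "num B i \<in> A_sym"
  by (rule A_symI[of _ "zer B" "zer B" 0 i]) (simp_all add: good_zer pl_zer zer_pl)

lemma zer_in_A_sym: "zer B \<in> A_sym"
  using num_in_A_sym[of 0] by simp

lemma on_in_A_sym: "on B \<in> A_sym"
  using num_in_A_sym[of 1] by (simp add: zer_pl)

lemma pl_in_A_sym:
  assumes "x \<in> A_sym" "y \<in> A_sym"
  shows "pl B x y \<in> A_sym"
proof -
  obtain a b j1 j1' where x: "x \<in> univ B" and a: "good B \<Delta> a" and b: "good B \<Delta> b"
    and e1: "pl B (pl B x a) (num B j1) = pl B b (num B j1')" using assms(1) by (rule A_symE)
  obtain c d j2 j2' where y: "y \<in> univ B" and c: "good B \<Delta> c" and d: "good B \<Delta> d"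
    and e2: "pl B (pl B y c) (num B j2) = pl B d (num B j2')" using assms(2) by (rule A_symE)
  have "sat B (env_of_list B [x, y, a, b, c, d]) (((Var 0 \<oplus> Var 2) \<oplus> numt j1 \<doteq> Var 3 \<oplus> numt j1') \<sqinter>
      ((Var 1 \<oplus> Var 4) \<oplus> numt j2 \<doteq> Var 5 \<oplus> numt j2') \<Rrightarrow>
      ((Var 0 \<oplus> Var 1) \<oplus> (Var 2 \<oplus> Var 4)) \<oplus> numt (j1 + j2) \<doteq> (Var 3 \<oplus> Var 5) \<oplus> numt (j1' + j2'))"
    by (rule sat_from_Nat) (use x y a b c d in \<open>auto simp: good_in_univ\<close>)
  then have "pl B (pl B (pl B x y) (pl B a c)) (num B (j1 + j2)) = pl B (pl B b d) (num B (j1' + j2'))"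
    using e1 e2 by (simp add: env_of_list_def)
  then show ?thesis using x y a b c d by (intro A_symI[of _ "pl B a c" "pl B b d"]) (auto intro: good_pl)
qed

lemma tms_in_A_sym:
  assumes "x \<in> A_sym" "y \<in> A_sym"
  shows "tms B x y \<in> A_sym"
proof -
  obtain a b j1 j1' where x: "x \<in> univ B" and a: "good B \<Delta> a" and b: "good B \<Delta> b"
    and e1: "pl B (pl B x a) (num B j1) = pl B b (num B j1')" using assms(1) by (rule A_symE)
  obtain c d j2 j2' where y: "y \<in> univ B" and c: "good B \<Delta> c" and d: "good B \<Delta> d"
    and e2: "pl B (pl B y c) (num B j2) = pl B d (num B j2')" using assms(2) by (rule A_symE)
  let ?\<phi> = "((Var 0 \<oplus> Var 2) \<oplus> numt j1 \<doteq> Var 3 \<oplus> numt j1') \<sqinter>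
      ((Var 1 \<oplus> Var 4) \<oplus> numt j2 \<doteq> Var 5 \<oplus> numt j2') \<Rrightarrow>
      (Var 0 \<otimes> Var 1 \<oplus> ((Var 0 \<otimes> Var 4 \<oplus> numt j2 \<otimes> Var 3) \<oplus> numt j2' \<otimes> Var 2)) \<oplus> numt (j2 * j1' + j2' * j1)
      \<doteq> ((Var 0 \<otimes> Var 5 \<oplus> numt j2' \<otimes> Var 3) \<oplus> numt j2 \<otimes> Var 2) \<oplus> numt (j2' * j1' + j2 * j1)"
  have "sat B (env_of_list B [x, y, a, b, c, d]) ?\<phi>"
  proof (rule sat_from_Nat)
    show "sat Nat_struc e ?\<phi>" for e using mult_shifted_eq_nat by simp
  qed (use x y a b c d in \<open>simp add: good_in_univ\<close>)
  then have eq: "pl B (pl B (tms B x y) (pl B (pl B (tms B x c) (tms B (num B j2) b)) (tms B (num B j2') a)))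
        (num B (j2 * j1' + j2' * j1))
      = pl B (pl B (pl B (tms B x d) (tms B (num B j2') b)) (tms B (num B j2) a)) (num B (j2' * j1' + j2 * j1))"
    using e1 e2 by (simp add: env_of_list_def)
  have ga: "good B \<Delta> (pl B (pl B (tms B x c) (tms B (num B j2) b)) (tms B (num B j2') a))"
    using x a b c by (intro good_pl good_tms) auto
  have gb: "good B \<Delta> (pl B (pl B (tms B x d) (tms B (num B j2') b)) (tms B (num B j2) a))"
    using x a b d by (intro good_pl good_tms) auto
  show ?thesis by (rule A_symI[OF tms_in[OF x y] ga gb eq])
qed

lemma A_sym_diff:
  assumes z: "z \<in> univ B" and "w \<in> A_sym" "pl B z w \<in> A_sym"
  shows "z \<in> A_sym"
proof -
  obtain a b j j' where w: "w \<in> univ B" and a: "good B \<Delta> a" and b: "good B \<Delta> b"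
    and e1: "pl B (pl B w a) (num B j) = pl B b (num B j')" using assms(2) by (rule A_symE)
  obtain c d l l' where c: "good B \<Delta> c" and d: "good B \<Delta> d"
    and e2: "pl B (pl B (pl B z w) c) (num B l) = pl B d (num B l')" using assms(3) by (rule A_symE)
  have "sat B (env_of_list B [z, w, a, b, c, d]) (((Var 1 \<oplus> Var 2) \<oplus> numt j \<doteq> Var 3 \<oplus> numt j') \<sqinter>
      (((Var 0 \<oplus> Var 1) \<oplus> Var 4) \<oplus> numt l \<doteq> Var 5 \<oplus> numt l') \<Rrightarrow>
      (Var 0 \<oplus> (Var 3 \<oplus> Var 4)) \<oplus> numt (j' + l) \<doteq> (Var 5 \<oplus> Var 2) \<oplus> numt (l' + j))"
    by (rule sat_from_Nat) (use z w a b c d in \<open>auto simp: good_in_univ\<close>)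
  then have "pl B (pl B z (pl B b c)) (num B (j' + l)) = pl B (pl B d a) (num B (l' + j))"
    using e1 e2 by (simp add: env_of_list_def)
  then show ?thesis using z a b c d by (intro A_symI[of _ "pl B b c" "pl B d a"]) (auto intro: good_pl)
qed

lemma A_sym_nsum_cancel:
  assumes n: "0 < n" and y: "y \<in> univ B" and "nsum B n y \<in> A_sym"
  shows "y \<in> A_sym"
proof -
  obtain a b j j' where a: "good B \<Delta> a" and b: "good B \<Delta> b"
    and e: "pl B (pl B (nsum B n y) a) (num B j) = pl B b (num B j')" using assms(3) by (rule A_symE)
  obtain W' where W': "W' \<in> univ B" "tms B (num B n) W' = a" "good B \<Delta> W'"
    using good_quotient_num[OF a n] by blast
  obtain W where W: "W \<in> univ B" "tms B (num B n) W = b" "good B \<Delta> W"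
    using good_quotient_num[OF b n] by blast
  let ?K = "j + j' + 1"
  have "sat B (env_of_list B [y, W, W']) ((nsumt n (Var 0) \<oplus> (numt n \<otimes> Var 2)) \<oplus> numt j \<doteq> (numt n \<otimes> Var 1) \<oplus> numt j'
      \<Rrightarrow> Disjs (concat (map (\<lambda>i. map (\<lambda>i'. (Var 0 \<oplus> Var 2) \<oplus> numt i \<doteq> Var 1 \<oplus> numt i') [0..<?K]) [0..<?K])))"
  proof (rule sat_from_Nat)
    show "sat Nat_struc e (((nsumt n (Var 0) \<oplus> (numt n \<otimes> Var 2)) \<oplus> numt j \<doteq> (numt n \<otimes> Var 1) \<oplus> numt j'
      \<Rrightarrow> Disjs (concat (map (\<lambda>i. map (\<lambda>i'. (Var 0 \<oplus> Var 2) \<oplus> numt i \<doteq> Var 1 \<oplus> numt i') [0..<?K]) [0..<?K]))))"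
      for e
      unfolding sat_Imp sat_Disjs_pairs using mult_cancel_shifted_nat[OF n, of "e 0" "e 2" j "e 1" j'] by simp
  qed (use y W W' in simp)
  then have "\<exists>i i'. pl B (pl B y W') (num B i) = pl B W (num B i')"
    using e W W' unfolding sat_Imp sat_Disjs_pairs by (auto simp: env_of_list_def)
  then show ?thesis using y W W' by (metis A_symI)
qed

lemma A_sym_div_mod:
  assumes n: "0 < n" and xA: "x \<in> A_sym"
  shows "\<exists>y\<in>A_sym. le B (nsum B n y) x \<and> le B x (nsum B n (pl B y (on B))) \<and> x \<noteq> nsum B n (pl B y (on B))"
proof -
  have x: "x \<in> univ B" using xA A_sym_subset_univ by blast
  have "sat B (env_of_list B [x]) (Disjs (map (\<lambda>i. Ex 1 ((Var 0 \<doteq> nsumt n (Var 1) \<oplus> numt i) \<sqinter>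
          (nsumt n (Var 1) \<preceq> Var 0) \<sqinter> (Var 0 \<preceq> nsumt n (Var 1 \<oplus> One)) \<sqinter>
          Neg (Var 0 \<doteq> nsumt n (Var 1 \<oplus> One)))) [0..<n]))"
    by (rule sat_from_Nat) (use x div_mod_bounds_nat[OF n] in \<open>auto simp: algebra_simps\<close>)
  then obtain i y where y: "y \<in> univ B" and xy: "x = pl B (nsum B n y) (num B i)"
    and bounds: "le B (nsum B n y) x \<and> le B x (nsum B n (pl B y (on B))) \<and> x \<noteq> nsum B n (pl B y (on B))"
    by (auto simp: env_of_list_def)
  have "nsum B n y \<in> A_sym" using A_sym_diff[OF nsum_in[OF y] num_in_A_sym] xy xA by simp
  then have "y \<in> A_sym" using A_sym_nsum_cancel[OF n y] by blast
  with bounds show ?thesis by blast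
qed

end

lemma restrict_struc_simps [simp]:
  "univ (restrict_struc B A) = A" "zer (restrict_struc B A) = zer B"
  "on (restrict_struc B A) = on B" "pl (restrict_struc B A) = pl B"
  "tms (restrict_struc B A) = tms B" "le (restrict_struc B A) = le B"
  by (simp_all add: restrict_struc_def)

lemma nsum_restrict_struc [simp]: "nsum (restrict_struc B A) n y = nsum B n y"
  by (induction n) simp_all

context ThN_model_nonstd
begin

lemma substructure_A_sym: "substructure A_sym B"
  unfolding substructure_def
  using A_sym_subset_univ zer_in_A_sym on_in_A_sym pl_in_A_sym tms_in_A_sym by blast

lemma presburger_A_sym: "presburger (restrict_struc B A_sym)"
  unfolding presburger_def restrict_struc_simps nsum_restrict_struc
proof (intro conjI ballI impI allI)
  fix z assume "z \<in> A_sym" then show "zer B \<noteq> pl B z (on B)"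
    using zer_neq_pl_on A_sym_subset_univ by blast
next
  fix x assume x: "x \<in> A_sym" "x \<noteq> zer B"
  then obtain z where z: "z \<in> univ B" "x = pl B z (on B)"
    using exists_pred A_sym_subset_univ by blast
  then have "z \<in> A_sym" using A_sym_diff[OF z(1) on_in_A_sym] x(1) by simp
  then show "\<exists>z\<in>A_sym. x = pl B z (on B)" using z by blast
next
  fix x y z assume "x \<in> A_sym" "y \<in> A_sym" "z \<in> A_sym" "pl B x z = pl B y z"
  then show "x = y" using pl_right_cancel A_sym_subset_univ by blast
next
  fix x assume "x \<in> A_sym" then show "pl B x (zer B) = x"
    using pl_zer A_sym_subset_univ by blast
next
  fix x y z assume "x \<in> A_sym" "y \<in> A_sym" "z \<in> A_sym"
  then show "pl B (pl B x y) z = pl B x (pl B y z)" using pl_assoc A_sym_subset_univ by blast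
next
  fix x y assume "x \<in> A_sym" "y \<in> A_sym"
  then show "pl B x y = pl B y x" using pl_commute A_sym_subset_univ by blast
next
  fix x y assume xy: "x \<in> A_sym" "y \<in> A_sym"
  then have U: "x \<in> univ B" "y \<in> univ B" using A_sym_subset_univ by auto
  show "le B x y \<longleftrightarrow> (\<exists>z\<in>A_sym. pl B x z = y)"
  proof
    assume "le B x y"
    then obtain z where z: "z \<in> univ B" "pl B x z = y" using le_iff_pl U by blast
    then have "z \<in> A_sym" using A_sym_diff[OF z(1) xy(1)] xy(2) pl_commute U by simp
    then show "\<exists>z\<in>A_sym. pl B x z = y" using z by blast
  qed (use le_iff_pl U A_sym_subset_univ in blast)
next
  fix n :: nat and x assume "0 < n" "x \<in> A_sym"
  then show "\<exists>y\<in>A_sym. le B (nsum B n y) x \<and> le B x (nsum B n (pl B y (on B))) \<and>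
      x \<noteq> nsum B n (pl B y (on B))"
    by (rule A_sym_div_mod)
qed

end

text \<open>The hypothesis that \<open>B\<close> has some nonstandard element is implied by the one on \<open>\<Delta>\<close>.\<close>

theorem lemma4p3:
  fixes B :: "'a struc" and \<Delta> :: 'a
  assumes "model_ThN B"
    and "\<exists>x. nonstandard_elt B x"
    and "nonstandard_elt B \<Delta>"
  shows "substructure (A_univ B \<Delta>) B \<and> presburger (restrict_struc B (A_univ B \<Delta>))"
proof -
  interpret ThN_model_nonstd B \<Delta> by unfold_locales (fact assms(1), fact assms(3))
  show ?thesis unfolding A_univ_eq_A_sym using substructure_A_sym presburger_A_sym by blast
qed

end
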